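(* For $n\ge 1$ and $0<z<1/n$ let $q_n(z) = \sum_{\pi\in S_n} z^{t(\pi)}$. Then \[ q_n(z) = O(\sqrt{n})\,\frac{e^{-n}}{(1-zn)^{1/z}}, \] i.e. there is an absolute constant $C$ such that $q_n(z) \le C\sqrt{n}\,e^{-n}(1-zn)^{-1/z}$ for all $n\ge1$ and $0<z<1/n$.
   Context: For $\pi\in S_n$, $t(\pi)$ is the minimum number of transpositions whose product is $\pi$; equivalently $t(\pi)=s(\pi)-c(\pi)$ where $s(\pi)$ is the number of points moved by $\pi$ and $c(\pi)$ the number of its cycles of length at least 2. *)

theory Defs
  imports "HOL-Analysis.Analysis" "HOL-Combinatorics.Combinatorics"
begin

definition tcount :: "(nat \<Rightarrow> nat) \<Rightarrow> nat" where
  "tcount p = (LEAST k. \<exists>ts :: (nat \<times> nat) list.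
      length ts = k \<and> (\<forall>(a,b)\<in>set ts. a \<noteq> b) \<and>
      p = foldr (\<lambda>(a,b) f. Transposition.transpose a b \<circ> f) ts id)"

definition qpoly :: "nat \<Rightarrow> real \<Rightarrow> real" where
  "qpoly n z = (\<Sum>p\<in>{p. p permutes {1..n}}. z ^ tcount p)"

end

theory Submission
  imports Defs
begin

text \<open>
  Sorting a permutation \<open>p\<close> top-down (for \<open>m = N-1, \<dots>, 0\<close> compose with the transposition
  \<open>(m p(m))\<close> that puts \<open>m\<close> back in place) uses \<open>swap_count N p\<close> transpositions, and this count
  grows by at most one when \<open>p\<close> is multiplied by a transposition; hence it is a lower bound
  for \<open>t\<close>.  Writing each permutation of \<open>{1..n+1}\<close> as \<open>(n+1 b) \<circ> q\<close> with \<open>q\<close> a permutation of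
  \<open>{1..n}\<close> shows \<open>\<Sum>\<^sub>p z^(swap_count p) = \<Prod>\<^sub>k (1 + k z) \<le> exp (z n\<^sup>2/2)\<close>, and
  \<open>ln (1 - x) \<le> -x - x\<^sup>2/2\<close> at \<open>x = z n\<close> bounds this by \<open>e^(-n) (1 - z n)^(-1/z)\<close>.
  So \<open>C = 1\<close> works, even without the factor \<open>\<surd>n\<close>.
\<close>

fun swap_count :: "nat \<Rightarrow> (nat \<Rightarrow> nat) \<Rightarrow> nat" where
  "swap_count 0 p = 0"
| "swap_count (Suc m) p =
     swap_count m (Transposition.transpose m (p m) \<circ> p) + (if p m = m then 0 else 1)"

lemma swap_count_id [simp]: "swap_count N id = 0"
  by (induction N) simp_all

lemma swap_count_transpose_comp_le:
  "swap_count N (Transposition.transpose a b \<circ> p) \<le> Suc (swap_count N p)"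
proof (induction N arbitrary: a b p)
  case 0
  show ?case by simp
next
  case (Suc M)
  let ?c = "p M"
  let ?q = "Transposition.transpose M ?c \<circ> p"
  have swap_top:
    "swap_count (Suc M) (Transposition.transpose M b \<circ> p) \<le> Suc (swap_count (Suc M) p)" for b
  proof -
    consider "b = M" | "b \<noteq> M" "?c = M" | "b \<noteq> M" "?c = b" | "b \<noteq> M" "?c \<noteq> M" "?c \<noteq> b"
      by blast
    then show ?thesis
    proof cases
      case 1
      then show ?thesis by simp
    next
      case 2
      then show ?thesis by (simp add: comp_assoc [symmetric])
    next
      case 3
      then show ?thesis by simp
    next
      case 4
      have "Transposition.transpose M ?c \<circ> (Transposition.transpose M b \<circ> p)
          = Transposition.transpose b ?c \<circ> ?q"
        using 4 by (auto simp: fun_eq_iff Transposition.transpose_def)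
      then have "swap_count (Suc M) (Transposition.transpose M b \<circ> p)
          = Suc (swap_count M (Transposition.transpose b ?c \<circ> ?q))"
        using 4 by simp
      also have "\<dots> \<le> Suc (Suc (swap_count M ?q))"
        using Suc.IH[of b ?c ?q] by (simp add: comp_def)
      finally show ?thesis
        using 4 by simp
    qed
  qed
  show ?case
  proof (cases "a = M \<or> b = M")
    case True
    obtain b' where b': "Transposition.transpose a b = Transposition.transpose M b'"
      using True by (metis transpose_commute)
    show ?thesis
      by (subst b') (rule swap_top)
  next
    case False
    let ?p = "Transposition.transpose a b \<circ> p"
    have conj: "Transposition.transpose M (?p M) \<circ> ?p = Transposition.transpose a b \<circ> ?q"
      using False by (auto simp: fun_eq_iff Transposition.transpose_def)
    have fixed: "?p M = M \<longleftrightarrow> ?c = M"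
      using False by (auto simp: Transposition.transpose_def)
    have "swap_count (Suc M) ?p
        = swap_count M (Transposition.transpose a b \<circ> ?q) + (if ?c = M then 0 else 1)"
      unfolding swap_count.simps conj fixed ..
    also have "\<dots> \<le> Suc (swap_count M ?q) + (if ?c = M then 0 else 1)"
      using Suc.IH[of a b ?q] by linarith
    also have "\<dots> = Suc (swap_count (Suc M) p)"
      by (simp only: swap_count.simps add_Suc)
    finally show ?thesis .
  qed
qed

lemma swap_count_le_swapidseq: "swapidseq k p \<Longrightarrow> swap_count N p \<le> k"
proof (induction rule: swapidseq.induct)
  case id
  show ?case
    using swap_count_id[of N] by (simp add: id_def)
next
  case (comp_Suc k p a b)
  then show ?case
    using swap_count_transpose_comp_le[of N a b p] by (simp add: comp_def)
qed

lemma swapidseq_foldr_transpose: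
  "\<forall>(a, b)\<in>set ts. a \<noteq> b \<Longrightarrow>
   swapidseq (length ts) (foldr (\<lambda>(a, b) f. Transposition.transpose a b \<circ> f) ts id)"
proof (induction ts)
  case Nil
  show ?case
    using swapidseq.id by (simp add: id_def)
next
  case (Cons ab ts)
  let ?F = "\<lambda>(a, b) f. Transposition.transpose a b \<circ> f"
  obtain a b where ab: "ab = (a, b)" by fastforce
  have "swapidseq (length ts) (foldr ?F ts id)"
    using Cons.prems by (intro Cons.IH) auto
  then have "swapidseq (Suc (length ts)) (Transposition.transpose a b \<circ> foldr ?F ts id)"
    using Cons.prems ab by (intro swapidseq.comp_Suc) auto
  moreover have "foldr ?F (ab # ts) id = Transposition.transpose a b \<circ> foldr ?F ts id"
    using ab by simp
  ultimately show ?case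
    by (metis length_Cons)
qed

lemma swapidseq_iff_transposition_product:
  "swapidseq k p \<longleftrightarrow> (\<exists>ts. length ts = k \<and> (\<forall>(a, b)\<in>set ts. a \<noteq> b) \<and>
     p = foldr (\<lambda>(a, b) f. Transposition.transpose a b \<circ> f) ts id)"
proof
  assume "swapidseq k p"
  then show "\<exists>ts. length ts = k \<and> (\<forall>(a, b)\<in>set ts. a \<noteq> b) \<and>
     p = foldr (\<lambda>(a, b) f. Transposition.transpose a b \<circ> f) ts id"
  proof (induction rule: swapidseq.induct)
    case id
    show ?case by (intro exI[of _ "[]"]) simp
  next
    case (comp_Suc k p a b)
    then obtain ts where "length ts = k" "\<forall>(a, b)\<in>set ts. a \<noteq> b"
      "p = foldr (\<lambda>(a, b) f. Transposition.transpose a b \<circ> f) ts id"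
      by blast
    with comp_Suc.hyps show ?case
      by (intro exI[of _ "(a, b) # ts"]) (simp add: comp_def id_def)
  qed
qed (auto intro: swapidseq_foldr_transpose)

lemma tcount_eq_Least_swapidseq: "tcount p = (LEAST k. swapidseq k p)"
  unfolding tcount_def swapidseq_iff_transposition_product ..

lemma swap_count_le_tcount:
  assumes "permutation p"
  shows "swap_count N p \<le> tcount p"
proof -
  from assms obtain k where "swapidseq k p"
    unfolding permutation_def ..
  then have "swapidseq (tcount p) p"
    unfolding tcount_eq_Least_swapidseq by (rule LeastI)
  then show ?thesis
    by (rule swap_count_le_swapidseq)
qed

lemma sum_permutes_power_swap_count:
  fixes z :: "'a::comm_semiring_1"
  shows "(\<Sum>p\<in>{p. p permutes {1..n}}. z ^ swap_count (Suc n) p) = (\<Prod>k<n. 1 + of_nat k * z)"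
proof (induction n)
  case 0
  show ?case by simp
next
  case (Suc n)
  let ?S = "{p. p permutes {1..n}}"
  \<comment> \<open>the first sorting step undoes \<open>(n+1 b)\<close>, since \<open>q\<close> fixes \<open>n+1\<close>\<close>
  have "swap_count (Suc (Suc n)) (Transposition.transpose (Suc n) b \<circ> q)
      = swap_count (Suc n) q + (if b = Suc n then 0 else 1)" if "q \<in> ?S" for b q
  proof -
    have "q (Suc n) = Suc n"
      using that by (auto simp: permutes_def)
    then show ?thesis
      by (simp add: comp_assoc [symmetric])
  qed
  then have "(\<Sum>p\<in>{p. p permutes insert (Suc n) {1..n}}. z ^ swap_count (Suc (Suc n)) p)
      = (\<Sum>b\<in>insert (Suc n) {1..n}. (if b = Suc n then 1 else z) * (\<Sum>q\<in>?S. z ^ swap_count (Suc n) q))"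
    by (simp add: sum_over_permutations_insert sum_distrib_left power_add mult.commute
        del: swap_count.simps cong: if_cong)
  also have "\<dots> = (1 + of_nat n * z) * (\<Sum>q\<in>?S. z ^ swap_count (Suc n) q)"
    by (simp add: sum_distrib_right algebra_simps del: swap_count.simps)
  finally show ?case
    using Suc by (simp add: atLeastAtMostSuc_conv mult.commute del: swap_count.simps)
qed

lemma ln_one_minus_le_quadratic:
  fixes x :: real
  assumes "0 \<le> x" "x < 1"
  shows "ln (1 - x) \<le> - x - x\<^sup>2 / 2"
proof -
  let ?f = "\<lambda>t::real. ln (1 - t) + t + t\<^sup>2 / 2"
  have "?f x \<le> ?f 0"
  proof (rule DERIV_nonpos_imp_nonincreasing[OF assms(1)])
    fix t :: real
    assume "0 \<le> t" "t \<le> x"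
    then have "t < 1"
      using assms by simp
    then have "DERIV ?f t :> - t\<^sup>2 / (1 - t)" and "- t\<^sup>2 / (1 - t) \<le> 0"
      by (auto intro!: derivative_eq_intros simp: field_simps power2_eq_square)
    then show "\<exists>y. DERIV ?f t :> y \<and> y \<le> 0"
      by blast
  qed
  then show ?thesis
    by simp
qed

lemma sum_lessThan_real_le_half_square: "(\<Sum>k<n. real k) \<le> real n ^ 2 / 2"
  by (induction n) (simp_all add: power2_eq_square field_simps)

lemma prod_one_plus_le_exp_half_square:
  fixes z :: real
  assumes "0 \<le> z"
  shows "(\<Prod>k<n. 1 + real k * z) \<le> exp (z * real n ^ 2 / 2)"
proof -
  have "(\<Prod>k<n. 1 + real k * z) \<le> (\<Prod>k<n. exp (real k * z))"
    using assms by (intro prod_mono) (auto simp: add.commute exp_ge_add_one_self)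
  also have "\<dots> = exp (z * (\<Sum>k<n. real k))"
    by (simp add: exp_sum sum_distrib_left mult.commute)
  also have "\<dots> \<le> exp (z * real n ^ 2 / 2)"
    using mult_left_mono[OF sum_lessThan_real_le_half_square assms] by simp
  finally show ?thesis .
qed

lemma exp_half_square_le_exp_powr:
  fixes x z :: real
  assumes "0 < z" "0 \<le> x" "z * x < 1"
  shows "exp (z * x\<^sup>2 / 2) \<le> exp (- x) * (1 - z * x) powr (- 1 / z)"
proof -
  have "(- 1 / z) * (- (z * x) - (z * x)\<^sup>2 / 2) \<le> (- 1 / z) * ln (1 - z * x)"
    using assms by (intro mult_left_mono_neg ln_one_minus_le_quadratic) auto
  moreover have "(- 1 / z) * (- (z * x) - (z * x)\<^sup>2 / 2) = x + z * x\<^sup>2 / 2"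
    using assms by (simp add: field_simps power2_eq_square)
  ultimately have "exp (z * x\<^sup>2 / 2) \<le> exp (- x + (- 1 / z) * ln (1 - z * x))"
    by simp
  also have "\<dots> = exp (- x) * (1 - z * x) powr (- 1 / z)"
    using assms by (simp add: powr_def exp_add [symmetric])
  finally show ?thesis .
qed

lemma qpoly_le_prod:
  assumes "0 \<le> z" "z \<le> 1"
  shows "qpoly n z \<le> (\<Prod>k<n. 1 + real k * z)"
proof -
  have "qpoly n z \<le> (\<Sum>p\<in>{p. p permutes {1..n}}. z ^ swap_count (Suc n) p)"
    unfolding qpoly_def
  proof (rule sum_mono)
    fix p
    assume "p \<in> {p. p permutes {1..n}}"
    then have "permutation p"
      by (auto intro: permutes_imp_permutation)
    then have "swap_count (Suc n) p \<le> tcount p"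
      by (rule swap_count_le_tcount)
    then show "z ^ tcount p \<le> z ^ swap_count (Suc n) p"
      using assms by (rule power_decreasing)
  qed
  also have "\<dots> = (\<Prod>k<n. 1 + real k * z)"
    by (rule sum_permutes_power_swap_count)
  finally show ?thesis .
qed

theorem lemma4:
  shows "\<exists>C::real. \<forall>(n::nat) (z::real). n \<ge> 1 \<longrightarrow> 0 < z \<longrightarrow> z < 1 / real n \<longrightarrow>
     qpoly n z \<le> C * sqrt (real n) * exp (- real n) * (1 - z * real n) powr (- 1 / z)"
proof (intro exI[of _ 1] allI impI)
  fix n :: nat and z :: real
  assume n: "n \<ge> 1" and z: "0 < z" and zn: "z < 1 / real n"
  then have "z * real n < 1"
    by (simp add: field_simps)
  moreover have "z \<le> z * real n"
    using n z by simp
  ultimately have "z \<le> 1"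
    by linarith
  have "qpoly n z \<le> (\<Prod>k<n. 1 + real k * z)"
    using z \<open>z \<le> 1\<close> by (intro qpoly_le_prod) auto
  also have "\<dots> \<le> exp (z * real n ^ 2 / 2)"
    using z by (intro prod_one_plus_le_exp_half_square) auto
  also have "\<dots> \<le> exp (- real n) * (1 - z * real n) powr (- 1 / z)"
    using z \<open>z * real n < 1\<close> by (intro exp_half_square_le_exp_powr) auto
  also have "\<dots> \<le> 1 * sqrt (real n) * exp (- real n) * (1 - z * real n) powr (- 1 / z)"
    using n mult_right_mono[of 1 "sqrt (real n)" "exp (- real n) * (1 - z * real n) powr (- 1 / z)"]
    by (simp add: mult.assoc)
  finally show "qpoly n z \<le> 1 * sqrt (real n) * exp (- real n) * (1 - z * real n) powr (- 1 / z)" .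
qed

end
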